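(* Let $G$ be a subgroup of $\Sigma_n$ and let $G^+=G\cap\Sigma_n^+$. Suppose that the set of atoms $S=\{s_1,\dots,s_n\}$ of $G^+$ has exactly $n$ elements, generates $G$, and that there is a positive integer $k$ with $D_{s_i}=D_i^k$ for all $i$. Define a binary operation on $S$ by $s_i*s_j=s_{\psi(s_i)(j)}$. Then the following are equivalent: (i) $G$ is permutation-free, i.e. the only permutation matrix in $G$ is the identity; (ii) $s(s*t)=t(t*s)$ in $G$ for all $s,t\in S$; (iii) $(S,* )$ is a cycle set and $G$ is its structure group (i.e. $s\mapsto s$ induces an isomorphism from the structure group of $(S,* )$ onto $G$).
   Context: $\Sigma_n$ is the group of $n\times n$ monomial matrices (exactly one nonzero entry in each row and column) over $\mathbb Q[q,q^{-1}]$, $q$ an indeterminate, whose nonzero entries are integer powers of $q$; $\Sigma_n^+$ is the submonoid of those whose nonzero entries are nonnegative powers of $q$. For $\sigma\in\mathfrak S_n$, $P_\sigma$ is the matrix with entry $1$ at $(i,\sigma(i))$ and $0$ elsewhere. Every monomial matrix $m$ decomposes uniquely as $m=D_mP_m$ with $D_m$ diagonal and $P_m=P_{\psi(m)}$ a permutation matrix; $\psi(m)\in\mathfrak S_n$ is the associated permutation. $D_i$ denotes $\mathrm{diag}(1,\dots,1,q,1,\dots,1)$ with $q$ in the $i$-th position. An atom of $G^+$ is an element $a\neq I$ of $G^+$ such that $a=bc$ with $b,c\in G^+$ implies $b=I$ or $c=I$. A cycle set is a set $S$ with binary operation $*$ such that each $t\mapsto s*t$ is bijective and $(s*t)*(s*u)=(t*s)*(t*u)$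 for all $s,t,u$; its structure group is the group with generators $S$ and relations $s(s*t)=t(t*s)$ for $s\ne t$. *)

theory Defs
  imports "HOL-Algebra.Algebra" "HOL-Combinatorics.Permutations"
begin

text \<open>A monomial n x n matrix m over Q[q,q^-1] whose nonzero entries are powers of q
  is determined by its unique decomposition m = D_m P_m, where D_m = diag(q^(d 1),...,q^(d n))
  and P_m = P_sigma (entry 1 at (i, sigma i)). We represent m by the pair (d, sigma) with
  indices 1..n; d is taken to be 0 outside {1..n}, and sigma permutes {1..n}.
  Matrix multiplication: (D P_sigma)(E P_tau) = D (P_sigma E P_sigma^-1) P_sigma P_tau and
  P_sigma E P_sigma^-1 = diag(e (sigma i)), P_sigma P_tau = P_(tau o sigma).
  Hence (d,sigma)(e,tau) = (\<lambda>i. d i + e (sigma i), tau o sigma).\<close>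

type_synonym mono = "(nat \<Rightarrow> int) \<times> (nat \<Rightarrow> nat)"

definition Sigma_n :: "nat \<Rightarrow> mono monoid" where
  "Sigma_n n = \<lparr> carrier = {m. snd m permutes {1..n} \<and> (\<forall>i. i \<notin> {1..n} \<longrightarrow> fst m i = 0)},
                 monoid.mult = (\<lambda>m m'. (\<lambda>i. fst m i + fst m' (snd m i), snd m' \<circ> snd m)),
                 monoid.one = (\<lambda>_. 0, id) \<rparr>"

definition Dpart :: "mono \<Rightarrow> (nat \<Rightarrow> int)" where "Dpart m = fst m"
definition psi :: "mono \<Rightarrow> (nat \<Rightarrow> nat)" where "psi m = snd m"

definition Sigma_n_plus :: "nat \<Rightarrow> mono set" where
  "Sigma_n_plus n = {m \<in> carrier (Sigma_n n). \<forall>i. Dpart m i \<ge> 0}"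

text \<open>Exponent vector of D_i^k = diag(1,..,q^k,..,1).\<close>
definition Di_pow :: "nat \<Rightarrow> int \<Rightarrow> (nat \<Rightarrow> int)" where
  "Di_pow i k = (\<lambda>j. if j = i then k else 0)"

definition Pmat :: "(nat \<Rightarrow> nat) \<Rightarrow> mono" where "Pmat \<sigma> = (\<lambda>_. 0, \<sigma>)"

definition atoms :: "('a, 'b) monoid_scheme \<Rightarrow> 'a set \<Rightarrow> 'a set" where
  "atoms M P = {a \<in> P. a \<noteq> \<one>\<^bsub>M\<^esub> \<and>
      (\<forall>b\<in>P. \<forall>c\<in>P. a = b \<otimes>\<^bsub>M\<^esub> c \<longrightarrow> b = \<one>\<^bsub>M\<^esub> \<or> c = \<one>\<^bsub>M\<^esub>)}"

definition permutation_free :: "nat \<Rightarrow> mono set \<Rightarrow> bool" where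
  "permutation_free n G \<longleftrightarrow> (\<forall>\<sigma>. \<sigma> permutes {1..n} \<longrightarrow> Pmat \<sigma> \<in> G \<longrightarrow> Pmat \<sigma> = \<one>\<^bsub>Sigma_n n\<^esub>)"

definition cycle_set :: "'a set \<Rightarrow> ('a \<Rightarrow> 'a \<Rightarrow> 'a) \<Rightarrow> bool" where
  "cycle_set S op \<longleftrightarrow> (\<forall>s\<in>S. bij_betw (op s) S S) \<and>
     (\<forall>s\<in>S. \<forall>t\<in>S. \<forall>u\<in>S. op (op s t) (op s u) = op (op t s) (op t u))"

text \<open>Words over S: letters (True, x) = x, (False, x) = x^-1. Free reduction via a stack.\<close>
fun fg_red :: "(bool \<times> 'a) list \<Rightarrow> (bool \<times> 'a) list" where
  "fg_red [] = []"
| "fg_red (x # xs) = (case fg_red xs of [] \<Rightarrow> [x]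
      | y # ys \<Rightarrow> if fst y = (\<not> fst x) \<and> snd y = snd x then ys else x # y # ys)"

definition free_group :: "'a set \<Rightarrow> (bool \<times> 'a) list monoid" where
  "free_group S = \<lparr> carrier = {w. snd ` set w \<subseteq> S \<and> fg_red w = w},
                    monoid.mult = (\<lambda>w v. fg_red (w @ v)), monoid.one = [] \<rparr>"

definition normal_closure :: "('a, 'b) monoid_scheme \<Rightarrow> 'a set \<Rightarrow> 'a set" where
  "normal_closure G R = generate G (\<Union>g\<in>carrier G. (\<lambda>r. g \<otimes>\<^bsub>G\<^esub> r \<otimes>\<^bsub>G\<^esub> inv\<^bsub>G\<^esub> g) ` R)"

definition cs_relators :: "'a set \<Rightarrow> ('a \<Rightarrow> 'a \<Rightarrow> 'a) \<Rightarrow> (bool \<times> 'a) list set" where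
  "cs_relators S op = {fg_red [(True, s), (True, op s t), (False, op t s), (False, t)] | s t.
                          s \<in> S \<and> t \<in> S \<and> s \<noteq> t}"

definition structure_group :: "'a set \<Rightarrow> ('a \<Rightarrow> 'a \<Rightarrow> 'a) \<Rightarrow> (bool \<times> 'a) list set monoid" where
  "structure_group S op = free_group S Mod normal_closure (free_group S) (cs_relators S op)"

definition sg_gen :: "'a set \<Rightarrow> ('a \<Rightarrow> 'a \<Rightarrow> 'a) \<Rightarrow> 'a \<Rightarrow> (bool \<times> 'a) list set" where
  "sg_gen S op s = normal_closure (free_group S) (cs_relators S op) #>\<^bsub>free_group S\<^esub> [(True, s)]"

end

theory Submission
  imports Defs "HOL-Combinatorics.Cycles"
begin

(* Let x_1, ..., x_n generate a group mapped to Sigma_n by x_i |-> s_i, and suppose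
   the relations x_i x_(sigma_i j) = x_j x_(sigma_j i) hold, sigma_i = psi(s_i). A positive word is
   then determined by the exponent vector of its diagonal part: if that vector is positive at j, the
   relations let x_j be moved to the front of the word, and induction on the length finishes. Some
   positive word Delta maps to a scalar matrix q^c I; comparing diagonal parts shows that it is
   central. Hence every element of the group is p Delta^(-a) with p positive, and an element whose
   image has trivial diagonal part must be 1.
   Applied to G itself, (ii) gives that a permutation matrix in G is trivial; applied to the
   structure group mapped onto G, it gives injectivity. Conversely s(s*t) and t(t*s) have the same
   diagonal part D_i^k D_j^k, so in a permutation-free G they coincide. *)

lemma carrier_Sigma_n:
  "carrier (Sigma_n n) = {m. snd m permutes {1..n} \<and> (\<forall>i. i \<notin> {1..n} \<longrightarrow> fst m i = 0)}"
  and mult_Sigma_n: "m \<otimes>\<^bsub>Sigma_n n\<^esub> m' = (\<lambda>i. fst m i + fst m' (snd m i), snd m' \<circ> snd m)"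
  and one_Sigma_n: "\<one>\<^bsub>Sigma_n n\<^esub> = (\<lambda>_. 0, id)"
  by (simp_all add: Sigma_n_def)

lemma Sigma_n_snd_permutes: "m \<in> carrier (Sigma_n n) \<Longrightarrow> snd m permutes {1..n}"
  by (simp add: carrier_Sigma_n)

lemma group_Sigma_n: "group (Sigma_n n)"
proof (rule groupI)
  fix m m' assume m: "m \<in> carrier (Sigma_n n)" and m': "m' \<in> carrier (Sigma_n n)"
  with m m' Sigma_n_snd_permutes show "m \<otimes>\<^bsub>Sigma_n n\<^esub> m' \<in> carrier (Sigma_n n)"
    by (auto simp: carrier_Sigma_n mult_Sigma_n permutes_compose permutes_not_in)
next
  fix m assume m: "m \<in> carrier (Sigma_n n)"
  then have p: "snd m permutes {1..n}" by (rule Sigma_n_snd_permutes)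
  let ?m' = "(\<lambda>i. - fst m (inv_into UNIV (snd m) i), inv_into UNIV (snd m))"
  have "?m' \<in> carrier (Sigma_n n)"
    using m p by (auto simp: carrier_Sigma_n permutes_inv permutes_not_in[OF permutes_inv[OF p]])
  moreover have "?m' \<otimes>\<^bsub>Sigma_n n\<^esub> m = \<one>\<^bsub>Sigma_n n\<^esub>"
    using p by (simp add: mult_Sigma_n one_Sigma_n permutes_inverses permutes_inv_o)
  ultimately show "\<exists>m'\<in>carrier (Sigma_n n). m' \<otimes>\<^bsub>Sigma_n n\<^esub> m = \<one>\<^bsub>Sigma_n n\<^esub>" by blast
qed (auto simp: carrier_Sigma_n mult_Sigma_n one_Sigma_n add.assoc comp_assoc)

lemma Sigma_n_eq_mult_Pmat_if_Dpart_eq: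
  assumes "A \<in> carrier (Sigma_n n)" "B \<in> carrier (Sigma_n n)" "fst A = fst B"
  obtains \<sigma> where "\<sigma> permutes {1..n}" "A = B \<otimes>\<^bsub>Sigma_n n\<^esub> Pmat \<sigma>"
proof
  have pA: "snd A permutes {1..n}" by (rule Sigma_n_snd_permutes[OF assms(1)])
  have pB: "snd B permutes {1..n}" by (rule Sigma_n_snd_permutes[OF assms(2)])
  show "snd A \<circ> inv_into UNIV (snd B) permutes {1..n}" by (rule permutes_compose[OF permutes_inv[OF pB] pA])
  show "A = B \<otimes>\<^bsub>Sigma_n n\<^esub> Pmat (snd A \<circ> inv_into UNIV (snd B))"
    using assms(3) pB by (simp add: mult_Sigma_n Pmat_def permutes_inv_o comp_assoc prod_eq_iff)
qed

definition const_vec :: "nat \<Rightarrow> int \<Rightarrow> nat \<Rightarrow> int" where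
  "const_vec n c = (\<lambda>l. if l \<in> {1..n} then c else 0)"

lemma const_vec_permutes: "p permutes {1..n} \<Longrightarrow> const_vec n c (p l) = const_vec n c l"
  using permutes_in_image[of p "{1..n}" l] by (simp add: const_vec_def)

lemma Sigma_n_pow_const_vec:
  assumes "p permutes {1..n}"
  shows "(const_vec n c, p) [^]\<^bsub>Sigma_n n\<^esub> m = (const_vec n (int m * c), p ^^ m)"
proof (induction m)
  case 0
  then show ?case by (simp add: one_Sigma_n const_vec_def fun_eq_iff)
next
  case (Suc m)
  then show ?case
    using const_vec_permutes[OF permutes_funpow[OF assms]]
    by (simp add: mult_Sigma_n const_vec_def algebra_simps fun_eq_iff funpow_swap1)
qed

section \<open>Positive words and the Garside element\<close>

lemma (in group) inv_commute:
  assumes "a \<in> carrier G" "b \<in> carrier G" "a \<otimes> b = b \<otimes> a"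
  shows "inv a \<otimes> b = b \<otimes> inv a"
proof -
  have "inv a \<otimes> b = inv a \<otimes> (b \<otimes> a) \<otimes> inv a" using assms(1,2) by (simp add: m_assoc)
  also have "\<dots> = inv a \<otimes> (a \<otimes> b) \<otimes> inv a" using assms(3) by simp
  also have "\<dots> = b \<otimes> inv a" using assms(1,2) by (simp add: m_assoc[symmetric])
  finally show ?thesis .
qed

locale monomial_cycle_rep = group +
  fixes n :: nat and k :: int and s :: "nat \<Rightarrow> mono" and phi :: "'a \<Rightarrow> mono" and x :: "nat \<Rightarrow> 'a"
  assumes phi_hom: "phi \<in> hom G (Sigma_n n)"
    and x_closed: "i \<in> {1..n} \<Longrightarrow> x i \<in> carrier G"
    and phi_x: "i \<in> {1..n} \<Longrightarrow> phi (x i) = s i"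
    and Dpart_s: "i \<in> {1..n} \<Longrightarrow> fst (s i) = Di_pow i k"
    and k_pos: "k > 0"
    and cycle_rel: "i \<in> {1..n} \<Longrightarrow> j \<in> {1..n} \<Longrightarrow> x i \<otimes> x (snd (s i) j) = x j \<otimes> x (snd (s j) i)"
begin

sublocale phi: group_hom G "Sigma_n n" phi
  by (simp add: group_hom_def group_hom_axioms_def is_group group_Sigma_n phi_hom)

lemma perm_s_permutes: "i \<in> {1..n} \<Longrightarrow> snd (s i) permutes {1..n}"
  using phi.hom_closed[OF x_closed] phi_x Sigma_n_snd_permutes by metis

lemma perm_s_in: "i \<in> {1..n} \<Longrightarrow> j \<in> {1..n} \<Longrightarrow> snd (s i) j \<in> {1..n}"
  using permutes_in_image[OF perm_s_permutes] by blast

definition prod_word :: "nat list \<Rightarrow> 'a" where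
  "prod_word L = foldr (\<lambda>i g. x i \<otimes> g) L \<one>"

lemma prod_word_Nil [simp]: "prod_word [] = \<one>"
  and prod_word_Cons [simp]: "prod_word (i # L) = x i \<otimes> prod_word L"
  by (simp_all add: prod_word_def)

lemma prod_word_closed: "set L \<subseteq> {1..n} \<Longrightarrow> prod_word L \<in> carrier G"
  by (induction L) (auto simp: x_closed)

lemma prod_word_append:
  "set L \<subseteq> {1..n} \<Longrightarrow> set L' \<subseteq> {1..n} \<Longrightarrow> prod_word (L @ L') = prod_word L \<otimes> prod_word L'"
  by (induction L) (auto simp: x_closed prod_word_closed m_assoc)

lemma prod_word_concat_replicate:
  assumes "set L \<subseteq> {1..n}"
  shows "prod_word (concat (replicate a L)) = prod_word L [^] a"
proof (induction a)
  case (Suc a)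
  have "set (concat (replicate a L)) \<subseteq> {1..n}" using assms by auto
  with Suc assms have "prod_word (concat (replicate (Suc a) L)) = prod_word L \<otimes> prod_word L [^] a"
    by (simp add: prod_word_append prod_word_closed)
  also have "\<dots> = prod_word L [^] Suc a"
    by (rule nat_pow_Suc2[symmetric, OF prod_word_closed[OF assms]])
  finally show ?case .
qed simp

definition deg :: "nat list \<Rightarrow> nat \<Rightarrow> int" where
  "deg L = fst (phi (prod_word L))"

lemma deg_Nil: "deg [] = (\<lambda>_. 0)"
  by (simp add: deg_def one_Sigma_n)

lemma deg_Cons:
  "i \<in> {1..n} \<Longrightarrow> set L \<subseteq> {1..n} \<Longrightarrow> deg (i # L) = (\<lambda>l. Di_pow i k l + deg L (snd (s i) l))"
  by (simp add: deg_def x_closed prod_word_closed phi_x mult_Sigma_n Dpart_s)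

lemma deg_nonneg: "set L \<subseteq> {1..n} \<Longrightarrow> deg L l \<ge> 0"
  by (induction L arbitrary: l) (simp_all add: deg_Nil deg_Cons Di_pow_def k_pos order.strict_implies_order)

lemma deg_Cons_self: "i \<in> {1..n} \<Longrightarrow> set L \<subseteq> {1..n} \<Longrightarrow> deg (i # L) i \<ge> k"
  using deg_nonneg[of L "snd (s i) i"] by (simp add: deg_Cons Di_pow_def)

lemma prod_word_left_divisible:
  "set L \<subseteq> {1..n} \<Longrightarrow> j \<in> {1..n} \<Longrightarrow> deg L j > 0 \<Longrightarrow>
     \<exists>L'. set L' \<subseteq> {1..n} \<and> prod_word L = x j \<otimes> prod_word L'"
proof (induction L arbitrary: j)
  case Nil
  then show ?case by (simp add: deg_Nil)
next
  case (Cons i L)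
  have i: "i \<in> {1..n}" and L: "set L \<subseteq> {1..n}" using Cons.prems(1) by auto
  show ?case
  proof (cases "i = j")
    case True
    with L show ?thesis by auto
  next
    case False
    have ij: "snd (s i) j \<in> {1..n}" "snd (s j) i \<in> {1..n}" using perm_s_in i Cons.prems(2) by auto
    have "deg L (snd (s i) j) > 0" using Cons.prems(3) False by (simp add: deg_Cons[OF i L] Di_pow_def)
    then obtain L' where L': "set L' \<subseteq> {1..n}" "prod_word L = x (snd (s i) j) \<otimes> prod_word L'"
      using Cons.IH L ij(1) by blast
    have "prod_word (i # L) = (x i \<otimes> x (snd (s i) j)) \<otimes> prod_word L'"
      using L' i ij by (simp add: m_assoc x_closed prod_word_closed)
    also have "\<dots> = x j \<otimes> prod_word (snd (s j) i # L')"
      using L' Cons.prems(2) ij by (simp add: cycle_rel[OF i Cons.prems(2)] m_assoc x_closed prod_word_closed)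
    finally show ?thesis using L' ij(2) by (intro exI[of _ "snd (s j) i # L'"]) auto
  qed
qed

lemma prod_word_eq_if_deg_eq:
  "set L \<subseteq> {1..n} \<Longrightarrow> set L' \<subseteq> {1..n} \<Longrightarrow> deg L = deg L' \<Longrightarrow> prod_word L = prod_word L'"
proof (induction L arbitrary: L')
  case Nil
  show ?case
  proof (cases L')
    case (Cons i L'')
    then have "deg L' i \<ge> k" using Nil.prems(2) deg_Cons_self by simp
    with fun_cong[OF Nil.prems(3), of i] k_pos show ?thesis by (simp add: deg_Nil)
  qed simp
next
  case (Cons i L)
  have i: "i \<in> {1..n}" and L: "set L \<subseteq> {1..n}" using Cons.prems(1) by auto
  have "deg L' i > 0" using deg_Cons_self[OF i L] Cons.prems(3) k_pos by simp
  then obtain L'' where L'': "set L'' \<subseteq> {1..n}" "prod_word L' = x i \<otimes> prod_word L''"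
    using prod_word_left_divisible Cons.prems(2) i by blast
  have eq: "deg (i # L) = deg (i # L'')" using Cons.prems(3) L''(2) by (simp add: deg_def)
  have "deg L (snd (s i) l) = deg L'' (snd (s i) l)" for l
    using fun_cong[OF eq, of l] by (simp add: deg_Cons[OF i L] deg_Cons[OF i L''(1)])
  then have "deg L l = deg L'' l" for l
    using permutes_inverses(1)[OF perm_s_permutes[OF i]] by metis
  then show ?case using Cons.IH[OF L L''(1)] L''(2) by auto
qed

lemma exists_word_with_deg:
  assumes "\<forall>l. l \<notin> {1..n} \<longrightarrow> u l = 0"
  shows "\<exists>L. set L \<subseteq> {1..n} \<and> deg L = (\<lambda>l. k * int (u l))"
  using assms
proof (induction "sum u {1..n}" arbitrary: u rule: less_induct)
  case less
  show ?case
  proof (cases "\<forall>l\<in>{1..n}. u l = 0")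
    case True
    have "u = (\<lambda>_. 0)"
    proof
      fix l show "u l = 0" using True less.prems by (cases "l \<in> {1..n}") auto
    qed
    then show ?thesis by (intro exI[of _ "[]"]) (simp add: deg_Nil)
  next
    case False
    then obtain j where j: "j \<in> {1..n}" "u j > 0" by auto
    define v where "v = u(j := u j - 1)"
    define w where "w = v \<circ> inv_into UNIV (snd (s j))"
    have p: "snd (s j) permutes {1..n}" using perm_s_permutes[OF j(1)] .
    have w_support: "\<forall>l. l \<notin> {1..n} \<longrightarrow> w l = 0"
    proof (intro allI impI)
      fix l assume l: "l \<notin> {1..n}"
      have "inv_into UNIV (snd (s j)) l = l" using permutes_not_in[OF permutes_inv[OF p] l] .
      then show "w l = 0" using l j less.prems by (auto simp: w_def v_def)
    qed
    have "sum w {1..n} = sum v {1..n}"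
      unfolding w_def using sum.permute[OF permutes_inv[OF p], of v] by simp
    also have "\<dots> < sum u {1..n}"
      using j by (intro sum_strict_mono_ex1) (auto simp: v_def)
    finally obtain L where L: "set L \<subseteq> {1..n}" "deg L = (\<lambda>l. k * int (w l))"
      using less.hyps w_support by blast
    have "deg (j # L) = (\<lambda>l. k * int (u l))"
    proof
      fix l
      have "deg (j # L) l = Di_pow j k l + k * int (v l)"
        using L by (simp add: deg_Cons[OF j(1) L(1)] w_def permutes_inverses(2)[OF p])
      also have "\<dots> = k * int (u l)"
        using j(2) by (auto simp: Di_pow_def v_def of_nat_diff algebra_simps)
      finally show "deg (j # L) l = k * int (u l)" .
    qed
    then show ?thesis using L j by (intro exI[of _ "j # L"]) auto
  qed
qed

lemma exists_garside_word:
  "\<exists>\<Delta> c. set \<Delta> \<subseteq> {1..n} \<and> c > 0 \<and> phi (prod_word \<Delta>) = (const_vec n c, id)"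
proof -
  have "\<forall>l. l \<notin> {1..n} \<longrightarrow> (if l \<in> {1..n} then 1 else 0 :: nat) = 0" by simp
  from exists_word_with_deg[OF this] obtain L
    where L: "set L \<subseteq> {1..n}" "deg L = (\<lambda>l. k * int (if l \<in> {1..n} then 1 else 0))"
    by blast
  define p where "p = snd (phi (prod_word L))"
  have p: "p permutes {1..n}"
    unfolding p_def by (rule Sigma_n_snd_permutes[OF phi.hom_closed[OF prod_word_closed[OF L(1)]]])
  have phi_L: "phi (prod_word L) = (const_vec n k, p)"
    using L(2) by (simp add: deg_def p_def const_vec_def prod_eq_iff fun_eq_iff)
  obtain m where m: "p ^^ m = id" "m > 0"
    using permutation_is_nilpotent p permutation_permutes by blast
  have "phi (prod_word (concat (replicate m L))) = (const_vec n (int m * k), id)"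
    using L(1) m(1) by (simp add: prod_word_concat_replicate phi.hom_nat_pow prod_word_closed phi_L
        Sigma_n_pow_const_vec[OF p])
  moreover have "set (concat (replicate m L)) \<subseteq> {1..n}" using L(1) by auto
  moreover have "int m * k > 0" using m(2) k_pos by simp
  ultimately show ?thesis by blast
qed

context
  fixes \<Delta> :: "nat list" and c :: int
  assumes garside_word: "set \<Delta> \<subseteq> {1..n}"
    and c_pos: "c > 0"
    and phi_garside: "phi (prod_word \<Delta>) = (const_vec n c, id)"
begin

lemma garside_closed: "prod_word \<Delta> \<in> carrier G"
  by (rule prod_word_closed[OF garside_word])

lemma x_garside_commute:
  assumes i: "i \<in> {1..n}"
  shows "x i \<otimes> prod_word \<Delta> = prod_word \<Delta> \<otimes> x i"
proof -
  \<comment> \<open>Since \<Delta> maps to the scalar matrix q^c I, both sides have diagonal part D_i^k q^c I.\<close>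
  have "deg (i # \<Delta>) = deg (\<Delta> @ [i])"
    using i garside_word phi_garside const_vec_permutes[OF perm_s_permutes[OF i]]
    by (simp add: deg_Cons deg_def prod_word_append phi.hom_mult prod_word_closed x_closed phi_x
        mult_Sigma_n Dpart_s fun_eq_iff)
  then have "prod_word (i # \<Delta>) = prod_word (\<Delta> @ [i])"
    using i garside_word by (intro prod_word_eq_if_deg_eq) auto
  then show ?thesis using i garside_word by (simp add: prod_word_append prod_word_closed x_closed)
qed

lemma garside_commute: "set L \<subseteq> {1..n} \<Longrightarrow> prod_word \<Delta> \<otimes> prod_word L = prod_word L \<otimes> prod_word \<Delta>"
proof (induction L)
  case Nil
  then show ?case using garside_closed by simp
next
  case (Cons i L)
  then have i: "i \<in> {1..n}" and L: "set L \<subseteq> {1..n}" by auto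
  have "prod_word \<Delta> \<otimes> prod_word (i # L) = x i \<otimes> (prod_word \<Delta> \<otimes> prod_word L)"
    using i L garside_closed by (simp add: x_garside_commute m_assoc[symmetric] x_closed prod_word_closed)
  also have "\<dots> = prod_word (i # L) \<otimes> prod_word \<Delta>"
    using i L garside_closed by (simp add: Cons.IH m_assoc x_closed prod_word_closed)
  finally show ?case .
qed

lemma generate_eq_fraction:
  "y \<in> generate G (x ` {1..n}) \<Longrightarrow>
     \<exists>L a. set L \<subseteq> {1..n} \<and> y = prod_word L \<otimes> inv (prod_word \<Delta> [^] (a :: nat))"
proof (induction rule: generate.induct)
  case one
  then show ?case by (intro exI[of _ "[]"] exI[of _ 0]) simp
next
  case (incl h)
  then obtain i where i: "i \<in> {1..n}" "h = x i" by auto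
  then show ?case by (intro exI[of _ "[i]"] exI[of _ 0]) (simp add: x_closed)
next
  case (inv h)
  then obtain i where i: "i \<in> {1..n}" "h = x i" by auto
  have "deg \<Delta> i > 0" using phi_garside i c_pos by (simp add: deg_def const_vec_def)
  then obtain L where L: "set L \<subseteq> {1..n}" "prod_word \<Delta> = x i \<otimes> prod_word L"
    using prod_word_left_divisible[OF garside_word i(1)] by blast
  then have "inv (x i) = prod_word L \<otimes> inv (prod_word \<Delta>)"
    using i(1) garside_closed by (simp add: m_assoc[symmetric] inv_solve_right x_closed prod_word_closed)
  then show ?case using L i by (intro exI[of _ L] exI[of _ 1]) (simp add: x_closed prod_word_closed)
next
  case (eng h h')
  obtain L and a :: nat where L: "set L \<subseteq> {1..n}" "h = prod_word L \<otimes> inv (prod_word \<Delta> [^] a)"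
    using eng.IH(1) by blast
  obtain L' and a' :: nat where L': "set L' \<subseteq> {1..n}" "h' = prod_word L' \<otimes> inv (prod_word \<Delta> [^] a')"
    using eng.IH(2) by blast
  have closed: "prod_word \<Delta> [^] a \<in> carrier G" "prod_word \<Delta> [^] a' \<in> carrier G"
    "prod_word L \<in> carrier G" "prod_word L' \<in> carrier G"
    using garside_closed L(1) L'(1) by (simp_all add: prod_word_closed)
  have commute: "inv (prod_word \<Delta> [^] a) \<otimes> prod_word L' = prod_word L' \<otimes> inv (prod_word \<Delta> [^] a)"
    using group_commutes_pow[OF garside_commute[OF L'(1)] garside_closed closed(4)]
    by (intro inv_commute closed)
  have "h \<otimes> h' = prod_word L \<otimes> (inv (prod_word \<Delta> [^] a) \<otimes> prod_word L') \<otimes> inv (prod_word \<Delta> [^] a')"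
    using L L' closed by (simp add: m_assoc)
  also have "\<dots> = (prod_word L \<otimes> prod_word L') \<otimes> (inv (prod_word \<Delta> [^] a) \<otimes> inv (prod_word \<Delta> [^] a'))"
    unfolding commute using closed by (simp add: m_assoc)
  also have "\<dots> = prod_word (L @ L') \<otimes> inv (prod_word \<Delta> [^] a' \<otimes> prod_word \<Delta> [^] a)"
    using closed L(1) L'(1) by (simp add: inv_mult_group prod_word_append)
  also have "\<dots> = prod_word (L @ L') \<otimes> inv (prod_word \<Delta> [^] (a' + a))"
    by (simp only: nat_pow_mult[OF garside_closed])
  finally show ?case using L(1) L'(1) by (intro exI[of _ "L @ L'"] exI[of _ "a' + a"]) simp
qed

lemma Dpart_trivial_imp_one_if_garside:
  assumes y: "y \<in> generate G (x ` {1..n})" and Dpart_y: "fst (phi y) = (\<lambda>_. 0)"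
  shows "y = \<one>"
proof -
  obtain L a where L: "set L \<subseteq> {1..n}" "y = prod_word L \<otimes> inv (prod_word \<Delta> [^] (a :: nat))"
    using generate_eq_fraction[OF y] by blast
  define \<Delta>_pow where "\<Delta>_pow = concat (replicate a \<Delta>)"
  have \<Delta>_pow: "set \<Delta>_pow \<subseteq> {1..n}" "prod_word \<Delta>_pow = prod_word \<Delta> [^] a"
    using garside_word by (auto simp: \<Delta>_pow_def prod_word_concat_replicate)
  have "x ` {1..n} \<subseteq> carrier G" using x_closed by auto
  then have y_closed: "y \<in> carrier G" using generate_in_carrier y by blast
  have L_eq: "prod_word L = y \<otimes> prod_word \<Delta>_pow"
    using L \<Delta>_pow y_closed garside_closed by (simp add: inv_solve_right prod_word_closed)
  have "snd (phi y) permutes {1..n}" by (rule Sigma_n_snd_permutes[OF phi.hom_closed[OF y_closed]])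
  then have "deg L = deg \<Delta>_pow"
    using Dpart_y y_closed \<Delta>_pow garside_closed const_vec_permutes
    by (simp add: deg_def L_eq phi.hom_mult phi.hom_nat_pow prod_word_closed phi_garside
        Sigma_n_pow_const_vec mult_Sigma_n)
  then have "prod_word L = prod_word \<Delta>_pow" by (rule prod_word_eq_if_deg_eq[OF L(1) \<Delta>_pow(1)])
  then show ?thesis using L_eq y_closed \<Delta>_pow by (simp add: garside_closed prod_word_closed)
qed

end

theorem Dpart_trivial_imp_one:
  "y \<in> generate G (x ` {1..n}) \<Longrightarrow> fst (phi y) = (\<lambda>_. 0) \<Longrightarrow> y = \<one>"
  using exists_garside_word Dpart_trivial_imp_one_if_garside by blast

end

section \<open>Free groups and evaluation of words\<close>

definition inverse_letters :: "bool \<times> 'a \<Rightarrow> bool \<times> 'a \<Rightarrow> bool" where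
  "inverse_letters l l' \<longleftrightarrow> fst l' = (\<not> fst l) \<and> snd l' = snd l"

definition cons_reduce :: "bool \<times> 'a \<Rightarrow> (bool \<times> 'a) list \<Rightarrow> (bool \<times> 'a) list" where
  "cons_reduce l w = (case w of [] \<Rightarrow> [l] | l' # w' \<Rightarrow> if inverse_letters l l' then w' else l # l' # w')"

lemma fg_red_Cons: "fg_red (l # w) = cons_reduce l (fg_red w)"
  by (simp add: cons_reduce_def inverse_letters_def split: list.split)

declare fg_red.simps(2) [simp del]

fun reduced :: "(bool \<times> 'a) list \<Rightarrow> bool" where
  "reduced [] = True"
| "reduced [l] = True"
| "reduced (l # l' # w) = (\<not> inverse_letters l l' \<and> reduced (l' # w))"

lemma reduced_ConsD: "reduced (l # w) \<Longrightarrow> reduced w"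
  by (cases w) auto

lemma reduced_cons_reduce: "reduced w \<Longrightarrow> reduced (cons_reduce l w)"
  by (cases w) (auto simp: cons_reduce_def dest: reduced_ConsD)

lemma reduced_fg_red: "reduced (fg_red w)"
  by (induction w) (auto simp: fg_red_Cons reduced_cons_reduce)

lemma fg_red_reduced: "reduced w \<Longrightarrow> fg_red w = w"
proof (induction w)
  case (Cons l w)
  then have "fg_red w = w" using reduced_ConsD by blast
  with Cons.prems show ?case by (cases w) (auto simp: fg_red_Cons cons_reduce_def)
qed simp

lemma fg_red_idem [simp]: "fg_red (fg_red w) = fg_red w"
  by (rule fg_red_reduced[OF reduced_fg_red])

lemma cons_reduce_cancel:
  assumes "inverse_letters l l'" "reduced w"
  shows "cons_reduce l (cons_reduce l' w) = w"
proof (cases w)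
  case (Cons l'' w')
  show ?thesis
  proof (cases "inverse_letters l' l''")
    case True
    with assms(1) have "l'' = l" by (cases l; cases l'; cases l'') (auto simp: inverse_letters_def)
    with assms(2) Cons have "cons_reduce l w' = l # w'" by (cases w') (auto simp: cons_reduce_def)
    with True Cons \<open>l'' = l\<close> show ?thesis by (simp add: cons_reduce_def)
  qed (use Cons assms(1) in \<open>simp add: cons_reduce_def\<close>)
qed (use assms(1) in \<open>simp add: cons_reduce_def\<close>)

lemma fg_red_append_right: "fg_red (w @ v) = fg_red (w @ fg_red v)"
  by (induction w) (auto simp: fg_red_Cons)

lemma fg_red_cons_reduce_append:
  assumes "reduced w"
  shows "fg_red (cons_reduce l w @ v) = cons_reduce l (fg_red (w @ v))"
proof (cases w)
  case (Cons l' w')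
  show ?thesis
  proof (cases "inverse_letters l l'")
    case True
    have "cons_reduce l (fg_red (w @ v)) = cons_reduce l (cons_reduce l' (fg_red (w' @ v)))"
      using Cons by (simp add: fg_red_Cons)
    also have "\<dots> = fg_red (w' @ v)" using cons_reduce_cancel[OF True reduced_fg_red] .
    finally show ?thesis using True Cons by (simp add: cons_reduce_def)
  qed (use Cons in \<open>simp add: cons_reduce_def fg_red_Cons\<close>)
qed (simp add: cons_reduce_def fg_red_Cons)

lemma fg_red_append_left: "fg_red (fg_red w @ v) = fg_red (w @ v)"
  by (induction w) (simp_all add: fg_red_Cons fg_red_cons_reduce_append[OF reduced_fg_red])

lemma set_fg_red_subset: "set (fg_red w) \<subseteq> set w"
proof (induction w)
  case (Cons l w)
  have "set (cons_reduce l (fg_red w)) \<subseteq> insert l (set (fg_red w))"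
    by (cases "fg_red w") (auto simp: cons_reduce_def)
  with Cons.IH show ?case by (auto simp: fg_red_Cons)
qed simp

definition word_inv :: "(bool \<times> 'a) list \<Rightarrow> (bool \<times> 'a) list" where
  "word_inv w = rev (map (\<lambda>(b, a). (\<not> b, a)) w)"

lemma fg_red_word_inv_append: "fg_red (word_inv w @ w) = []"
proof (induction w)
  case (Cons l w)
  have "fg_red ((\<not> fst l, snd l) # l # w) = fg_red w"
    by (simp add: fg_red_Cons cons_reduce_cancel reduced_fg_red inverse_letters_def)
  then have "fg_red (word_inv (l # w) @ l # w) = fg_red (word_inv w @ fg_red w)"
    using fg_red_append_right[of "word_inv w" "(\<not> fst l, snd l) # l # w"]
    by (simp add: word_inv_def case_prod_beta)
  with Cons.IH show ?case using fg_red_append_right[of "word_inv w" w] by simp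
qed (simp add: word_inv_def)

lemma carrier_free_group: "carrier (free_group S) = {w. snd ` set w \<subseteq> S \<and> fg_red w = w}"
  and mult_free_group: "w \<otimes>\<^bsub>free_group S\<^esub> v = fg_red (w @ v)"
  and one_free_group: "\<one>\<^bsub>free_group S\<^esub> = []"
  by (simp_all add: free_group_def)

lemma fg_red_in_free_group: "snd ` set w \<subseteq> S \<Longrightarrow> fg_red w \<in> carrier (free_group S)"
  using set_fg_red_subset[of w] by (auto simp: carrier_free_group)

lemma group_free_group: "group (free_group S)"
proof (rule groupI)
  fix w v assume "w \<in> carrier (free_group S)" "v \<in> carrier (free_group S)"
  then have "snd ` set (w @ v) \<subseteq> S" by (auto simp: carrier_free_group)
  then show "w \<otimes>\<^bsub>free_group S\<^esub> v \<in> carrier (free_group S)"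
    by (simp add: mult_free_group fg_red_in_free_group)
next
  fix w v u
  show "w \<otimes>\<^bsub>free_group S\<^esub> v \<otimes>\<^bsub>free_group S\<^esub> u = w \<otimes>\<^bsub>free_group S\<^esub> (v \<otimes>\<^bsub>free_group S\<^esub> u)"
    using fg_red_append_right[of w "v @ u"] by (simp add: mult_free_group fg_red_append_left)
next
  fix w assume w: "w \<in> carrier (free_group S)"
  have "snd ` set (word_inv w) = snd ` set w" by (force simp: word_inv_def)
  then have "snd ` set (word_inv w) \<subseteq> S" using w by (simp add: carrier_free_group)
  then have "fg_red (word_inv w) \<in> carrier (free_group S)" by (rule fg_red_in_free_group)
  moreover have "fg_red (word_inv w) \<otimes>\<^bsub>free_group S\<^esub> w = \<one>\<^bsub>free_group S\<^esub>"
    by (simp add: mult_free_group one_free_group fg_red_append_left fg_red_word_inv_append)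
  ultimately show "\<exists>v\<in>carrier (free_group S). v \<otimes>\<^bsub>free_group S\<^esub> w = \<one>\<^bsub>free_group S\<^esub>" by blast
qed (auto simp: carrier_free_group mult_free_group one_free_group)

lemma letter_in_free_group: "a \<in> S \<Longrightarrow> [(b, a)] \<in> carrier (free_group S)"
  by (simp add: carrier_free_group fg_red_Cons cons_reduce_def)

lemma inv_letter_free_group: "a \<in> S \<Longrightarrow> inv\<^bsub>free_group S\<^esub> [(True, a)] = [(False, a)]"
  by (rule group.inv_equality[OF group_free_group])
     (simp_all add: letter_in_free_group mult_free_group one_free_group fg_red_Cons cons_reduce_def
       inverse_letters_def)

lemma free_group_generate:
  "carrier (free_group S) = generate (free_group S) ((\<lambda>a. [(True, a)]) ` S)"
proof
  interpret F: group "free_group S" by (rule group_free_group)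
  show "generate (free_group S) ((\<lambda>a. [(True, a)]) ` S) \<subseteq> carrier (free_group S)"
    using F.generate_in_carrier[of "(\<lambda>a. [(True, a)]) ` S"] by (auto intro: letter_in_free_group)
  have "w \<in> generate (free_group S) ((\<lambda>a. [(True, a)]) ` S)" if "snd ` set w \<subseteq> S" "reduced w" for w
    using that
  proof (induction w)
    case Nil
    then show ?case using generate.one[of "free_group S"] by (simp add: one_free_group)
  next
    case (Cons l w)
    obtain b a where l: "l = (b, a)" and a: "a \<in> S" using Cons.prems(1) by (cases l) auto
    have "[l] \<in> generate (free_group S) ((\<lambda>a. [(True, a)]) ` S)"
    proof (cases b)
      case False
      then have "[l] = inv\<^bsub>free_group S\<^esub> [(True, a)]" using l a by (simp add: inv_letter_free_group)
      then show ?thesis using a by (simp add: generate.inv)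
    qed (use l a in \<open>simp add: generate.incl\<close>)
    moreover have "l # w = [l] \<otimes>\<^bsub>free_group S\<^esub> w"
      using fg_red_reduced[OF Cons.prems(2)] by (simp add: mult_free_group)
    moreover have "w \<in> generate (free_group S) ((\<lambda>a. [(True, a)]) ` S)"
      using Cons reduced_ConsD[OF Cons.prems(2)] by simp
    ultimately show ?case by (simp add: generate.eng)
  qed
  moreover have "reduced w" if "w \<in> carrier (free_group S)" for w
    using that reduced_fg_red[of w] by (simp add: carrier_free_group)
  ultimately show "carrier (free_group S) \<subseteq> generate (free_group S) ((\<lambda>a. [(True, a)]) ` S)"
    by (auto simp: carrier_free_group)
qed

definition eval_letter :: "('a, 'b) monoid_scheme \<Rightarrow> bool \<times> 'a \<Rightarrow> 'a" where
  "eval_letter H l = (if fst l then snd l else inv\<^bsub>H\<^esub> (snd l))"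

definition eval_word :: "('a, 'b) monoid_scheme \<Rightarrow> (bool \<times> 'a) list \<Rightarrow> 'a" where
  "eval_word H w = foldr (\<lambda>l g. eval_letter H l \<otimes>\<^bsub>H\<^esub> g) w \<one>\<^bsub>H\<^esub>"

context group
begin

lemma eval_word_Nil [simp]: "eval_word G [] = \<one>"
  and eval_word_Cons [simp]: "eval_word G (l # w) = eval_letter G l \<otimes> eval_word G w"
  by (simp_all add: eval_word_def)

lemma eval_letter_closed: "snd l \<in> carrier G \<Longrightarrow> eval_letter G l \<in> carrier G"
  by (simp add: eval_letter_def)

lemma eval_word_closed: "snd ` set w \<subseteq> carrier G \<Longrightarrow> eval_word G w \<in> carrier G"
  by (induction w) (simp_all add: eval_letter_closed)

lemma eval_word_append:
  "snd ` set w \<subseteq> carrier G \<Longrightarrow> snd ` set v \<subseteq> carrier G \<Longrightarrow>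
     eval_word G (w @ v) = eval_word G w \<otimes> eval_word G v"
  by (induction w) (simp_all add: eval_letter_closed eval_word_closed m_assoc)

lemma eval_word_cons_reduce:
  assumes "snd l \<in> carrier G" "snd ` set w \<subseteq> carrier G"
  shows "eval_word G (cons_reduce l w) = eval_letter G l \<otimes> eval_word G w"
proof (cases w)
  case (Cons l' w')
  show ?thesis
  proof (cases "inverse_letters l l'")
    case True
    then have "eval_letter G l \<otimes> eval_letter G l' = \<one>"
      using assms(1) by (cases "fst l") (simp_all add: eval_letter_def inverse_letters_def)
    then show ?thesis
      using True Cons assms by (simp add: cons_reduce_def eval_letter_closed eval_word_closed m_assoc[symmetric])
  qed (simp add: Cons cons_reduce_def)
qed (simp add: cons_reduce_def)

lemma eval_word_fg_red: "snd ` set w \<subseteq> carrier G \<Longrightarrow> eval_word G (fg_red w) = eval_word G w"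
proof (induction w)
  case (Cons l w)
  moreover have "snd ` set (fg_red w) \<subseteq> carrier G"
    using Cons.prems set_fg_red_subset[of w] by auto
  ultimately show ?case by (simp add: fg_red_Cons eval_word_cons_reduce)
qed simp

lemma eval_word_hom:
  assumes "S \<subseteq> carrier G"
  shows "eval_word G \<in> hom (free_group S) G"
proof (rule homI)
  fix w v assume "w \<in> carrier (free_group S)" "v \<in> carrier (free_group S)"
  then have "snd ` set w \<subseteq> carrier G" "snd ` set v \<subseteq> carrier G"
    using assms by (auto simp: carrier_free_group)
  moreover from this have "snd ` set (w @ v) \<subseteq> carrier G" by auto
  ultimately show "eval_word G (w \<otimes>\<^bsub>free_group S\<^esub> v) = eval_word G w \<otimes> eval_word G v"
    by (simp add: mult_free_group eval_word_fg_red eval_word_append)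
qed (use assms in \<open>auto simp: carrier_free_group intro: eval_word_closed\<close>)

end

context group
begin

lemma normal_closure_normal: "R \<subseteq> carrier G \<Longrightarrow> normal_closure G R \<lhd> G"
  unfolding normal_closure_def
proof (rule normal_generateI)
  show "R \<subseteq> carrier G \<Longrightarrow> (\<Union>g\<in>carrier G. (\<lambda>r. g \<otimes> r \<otimes> inv g) ` R) \<subseteq> carrier G" by auto
next
  fix h g assume R: "R \<subseteq> carrier G" and h: "h \<in> (\<Union>g\<in>carrier G. (\<lambda>r. g \<otimes> r \<otimes> inv g) ` R)"
    and g: "g \<in> carrier G"
  then obtain g' r where g': "g' \<in> carrier G" and r: "r \<in> R" and h_eq: "h = g' \<otimes> r \<otimes> inv g'" by blast
  then have "g \<otimes> h \<otimes> inv g = (g \<otimes> g') \<otimes> r \<otimes> inv (g \<otimes> g')"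
    using R g by (auto simp: inv_mult_group m_assoc)
  then show "g \<otimes> h \<otimes> inv g \<in> (\<Union>g\<in>carrier G. (\<lambda>r. g \<otimes> r \<otimes> inv g) ` R)"
    using g g' r by blast
qed

lemma subset_normal_closure: "R \<subseteq> carrier G \<Longrightarrow> R \<subseteq> normal_closure G R"
  unfolding normal_closure_def
proof
  fix r assume "R \<subseteq> carrier G" "r \<in> R"
  then have "r = \<one> \<otimes> r \<otimes> inv \<one>" by auto
  with \<open>r \<in> R\<close> show "r \<in> generate G (\<Union>g\<in>carrier G. (\<lambda>r. g \<otimes> r \<otimes> inv g) ` R)"
    by (blast intro: generate.incl)
qed

end

lemma (in group_hom) normal_closure_subset_kernel:
  assumes "R \<subseteq> carrier G" "\<And>r. r \<in> R \<Longrightarrow> h r = \<one>\<^bsub>H\<^esub>"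
  shows "normal_closure G R \<subseteq> kernel G H h"
  unfolding normal_closure_def
proof (rule G.generate_subgroup_incl[OF _ subgroup_kernel])
  show "(\<Union>g\<in>carrier G. (\<lambda>r. g \<otimes> r \<otimes> inv g) ` R) \<subseteq> kernel G H h"
    using assms by (auto simp: kernel_def)
qed

definition sg_proj :: "'a set \<Rightarrow> ('a \<Rightarrow> 'a \<Rightarrow> 'a) \<Rightarrow> (bool \<times> 'a) list \<Rightarrow> (bool \<times> 'a) list set" where
  "sg_proj S op w = normal_closure (free_group S) (cs_relators S op) #>\<^bsub>free_group S\<^esub> w"

lemma sg_gen_eq_sg_proj: "sg_gen S op a = sg_proj S op [(True, a)]"
  by (simp add: sg_gen_def sg_proj_def)

context
  fixes S :: "'a set" and op :: "'a \<Rightarrow> 'a \<Rightarrow> 'a"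
  assumes op_closed: "\<And>a b. a \<in> S \<Longrightarrow> b \<in> S \<Longrightarrow> op a b \<in> S"
begin

lemma cs_relators_closed: "cs_relators S op \<subseteq> carrier (free_group S)"
  using op_closed by (auto simp: cs_relators_def intro!: fg_red_in_free_group)

lemma normal_closure_cs_relators: "normal_closure (free_group S) (cs_relators S op) \<lhd> free_group S"
  by (rule group.normal_closure_normal[OF group_free_group cs_relators_closed])

lemma group_structure_group: "group (structure_group S op)"
  unfolding structure_group_def by (rule normal.factorgroup_is_group[OF normal_closure_cs_relators])

lemma group_hom_sg_proj: "group_hom (free_group S) (structure_group S op) (sg_proj S op)"
  unfolding structure_group_def sg_proj_def
  by (intro group_hom.intro group_hom_axioms.intro group_free_group normal.r_coset_hom_Mod
      normal.factorgroup_is_group normal_closure_cs_relators)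

lemma sg_gen_closed: "a \<in> S \<Longrightarrow> sg_gen S op a \<in> carrier (structure_group S op)"
  unfolding sg_gen_eq_sg_proj by (rule group_hom.hom_closed[OF group_hom_sg_proj letter_in_free_group])

lemma sg_gen_relation:
  assumes a: "a \<in> S" and b: "b \<in> S"
  shows "sg_gen S op a \<otimes>\<^bsub>structure_group S op\<^esub> sg_gen S op (op a b)
       = sg_gen S op b \<otimes>\<^bsub>structure_group S op\<^esub> sg_gen S op (op b a)"
proof (cases "a = b")
  case False
  interpret F: group "free_group S" by (rule group_free_group)
  interpret q: group_hom "free_group S" "structure_group S op" "sg_proj S op"
    by (rule group_hom_sg_proj)
  define N where "N = normal_closure (free_group S) (cs_relators S op)"
  define p where "p = [(True, a)] \<otimes>\<^bsub>free_group S\<^esub> [(True, op a b)]"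
  define p' where "p' = [(True, b)] \<otimes>\<^bsub>free_group S\<^esub> [(True, op b a)]"
  have closed: "[(True, a)] \<in> carrier (free_group S)" "[(True, b)] \<in> carrier (free_group S)"
    "[(True, op a b)] \<in> carrier (free_group S)" "[(True, op b a)] \<in> carrier (free_group S)"
    using a b op_closed by (simp_all add: letter_in_free_group)
  then have pp': "p \<in> carrier (free_group S)" "p' \<in> carrier (free_group S)" by (simp_all add: p_def p'_def)
  have "inv\<^bsub>free_group S\<^esub> p' = [(False, op b a)] \<otimes>\<^bsub>free_group S\<^esub> [(False, b)]"
    using closed a b op_closed by (simp add: p'_def F.inv_mult_group inv_letter_free_group)
  then have "p \<otimes>\<^bsub>free_group S\<^esub> inv\<^bsub>free_group S\<^esub> p'
      = fg_red [(True, a), (True, op a b), (False, op b a), (False, b)]"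
    by (simp add: p_def mult_free_group fg_red_append_left fg_red_append_right[symmetric])
  also have "\<dots> \<in> N"
    using False a b F.subset_normal_closure[OF cs_relators_closed] unfolding N_def cs_relators_def by blast
  finally have "sg_proj S op (p \<otimes>\<^bsub>free_group S\<^esub> inv\<^bsub>free_group S\<^esub> p') = \<one>\<^bsub>structure_group S op\<^esub>"
    using normal_imp_subgroup[OF normal_closure_cs_relators]
    by (simp add: sg_proj_def N_def structure_group_def subgroup.rcos_const[OF _ group_free_group])
  then have "sg_proj S op p = sg_proj S op p'" using pp' by (simp add: q.H.inv_solve_right')
  then show ?thesis using closed by (simp add: sg_gen_eq_sg_proj p_def p'_def)
qed simp

lemma structure_group_generate:
  "carrier (structure_group S op) = generate (structure_group S op) (sg_gen S op ` S)"
proof -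
  interpret q: group_hom "free_group S" "structure_group S op" "sg_proj S op"
    by (rule group_hom_sg_proj)
  have letters: "(\<lambda>a. [(True, a)]) ` S \<subseteq> carrier (free_group S)"
    by (auto intro: letter_in_free_group)
  have "carrier (structure_group S op) = sg_proj S op ` carrier (free_group S)"
    by (simp add: structure_group_def sg_proj_def carrier_FactGroup)
  also have "\<dots> = generate (structure_group S op) (sg_proj S op ` (\<lambda>a. [(True, a)]) ` S)"
    by (simp only: free_group_generate[of S] q.generate_img[OF letters])
  also have "sg_proj S op ` (\<lambda>a. [(True, a)]) ` S = sg_gen S op ` S"
    by (auto simp: sg_gen_eq_sg_proj)
  finally show ?thesis .
qed

lemma structure_group_lift:
  assumes H: "group H" and S: "S \<subseteq> carrier H"
    and rel: "\<And>a b. a \<in> S \<Longrightarrow> b \<in> S \<Longrightarrow> a \<otimes>\<^bsub>H\<^esub> op a b = b \<otimes>\<^bsub>H\<^esub> op b a"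
  obtains h where "h \<in> hom (structure_group S op) H" "\<And>a. a \<in> S \<Longrightarrow> h (sg_gen S op a) = a"
proof -
  interpret H: group H by (rule H)
  interpret e: group_hom "free_group S" H "eval_word H"
    by (intro group_hom.intro group_hom_axioms.intro group_free_group H H.eval_word_hom S)
  have "eval_word H r = \<one>\<^bsub>H\<^esub>" if relator: "r \<in> cs_relators S op" for r
  proof -
    obtain a b where r: "r = fg_red [(True, a), (True, op a b), (False, op b a), (False, b)]"
      and ab: "a \<in> S" "b \<in> S"
      using relator by (auto simp: cs_relators_def)
    have closed: "a \<in> carrier H" "b \<in> carrier H" "op a b \<in> carrier H" "op b a \<in> carrier H"
      using ab S op_closed by auto
    then have "eval_word H r = a \<otimes>\<^bsub>H\<^esub> op a b \<otimes>\<^bsub>H\<^esub> inv\<^bsub>H\<^esub> op b a \<otimes>\<^bsub>H\<^esub> inv\<^bsub>H\<^esub> b"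
      by (simp add: r H.eval_word_fg_red eval_letter_def H.m_assoc)
    also have "\<dots> = \<one>\<^bsub>H\<^esub>"
      using closed by (simp add: rel[OF ab] H.m_assoc)
    finally show ?thesis .
  qed
  then have "normal_closure (free_group S) (cs_relators S op) \<subseteq> kernel (free_group S) H (eval_word H)"
    by (intro e.normal_closure_subset_kernel cs_relators_closed)
  then obtain h where h: "h \<in> hom (structure_group S op) H"
    "\<And>w. w \<in> carrier (free_group S) \<Longrightarrow> h (sg_proj S op w) = eval_word H w"
    using e.FactGroup_universal_kernel[OF normal_closure_cs_relators]
    unfolding structure_group_def sg_proj_def by blast
  show thesis
  proof (rule that[OF h(1)])
    fix a assume "a \<in> S"
    then show "h (sg_gen S op a) = a"
      using S h(2)[OF letter_in_free_group] by (auto simp: sg_gen_eq_sg_proj eval_letter_def)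
  qed
qed

end


section \<open>Groups generated by their atoms\<close>

locale atom_generated_group =
  fixes n :: nat and G :: "mono set" and s :: "nat \<Rightarrow> mono" and k :: int
  assumes subgroup_G: "subgroup G (Sigma_n n)"
    and atoms_eq: "atoms (Sigma_n n) (G \<inter> Sigma_n_plus n) = s ` {1..n}"
    and card_atoms: "card (atoms (Sigma_n n) (G \<inter> Sigma_n_plus n)) = n"
    and generate_atoms: "generate (Sigma_n n) (atoms (Sigma_n n) (G \<inter> Sigma_n_plus n)) = G"
    and k_pos: "k > 0"
    and Dpart_s: "\<forall>i\<in>{1..n}. Dpart (s i) = Di_pow i k"
begin

abbreviation S :: "mono set" where
  "S \<equiv> s ` {1..n}"

abbreviation star :: "mono \<Rightarrow> mono \<Rightarrow> mono" where
  "star a b \<equiv> s (psi a (inv_into {1..n} s b))"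

definition cycle_relations :: bool where
  "cycle_relations \<longleftrightarrow>
     (\<forall>a\<in>S. \<forall>b\<in>S. a \<otimes>\<^bsub>Sigma_n n\<^esub> star a b = b \<otimes>\<^bsub>Sigma_n n\<^esub> star b a)"

lemma inj_on_s: "inj_on s {1..n}"
  using card_atoms atoms_eq by (simp add: inj_on_iff_eq_card)

lemma atoms_subset_G: "S \<subseteq> G"
  using atoms_eq[symmetric] by (auto simp: atoms_def)

lemma s_in_G: "i \<in> {1..n} \<Longrightarrow> s i \<in> G"
  using atoms_subset_G by blast

lemma atoms_subset_carrier: "S \<subseteq> carrier (Sigma_n n)"
  using s_in_G subgroup.subset[OF subgroup_G] by blast

lemma s_closed: "i \<in> {1..n} \<Longrightarrow> s i \<in> carrier (Sigma_n n)"
  using atoms_subset_carrier by blast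

lemma perm_s_permutes: "i \<in> {1..n} \<Longrightarrow> snd (s i) permutes {1..n}"
  using s_closed by (rule Sigma_n_snd_permutes)

lemma perm_s_in: "i \<in> {1..n} \<Longrightarrow> j \<in> {1..n} \<Longrightarrow> snd (s i) j \<in> {1..n}"
  using permutes_in_image[OF perm_s_permutes] by blast

lemma fst_s: "i \<in> {1..n} \<Longrightarrow> fst (s i) = Di_pow i k"
  using Dpart_s by (simp add: Dpart_def)

lemma star_s: "j \<in> {1..n} \<Longrightarrow> star (s i) (s j) = s (snd (s i) j)"
  unfolding psi_def inv_into_f_f[OF inj_on_s] by simp

lemma star_closed:
  assumes "a \<in> S" "b \<in> S"
  shows "star a b \<in> S"
proof -
  obtain i j where ij: "i \<in> {1..n}" "j \<in> {1..n}" and "a = s i" "b = s j" using assms by blast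
  then show ?thesis unfolding \<open>a = s i\<close> \<open>b = s j\<close> star_s[OF ij(2)] using perm_s_in by blast
qed

lemma group_atom_structure_group: "group (structure_group S star)"
  by (rule group_structure_group) (rule star_closed)

lemma atom_sg_gen_closed: "a \<in> S \<Longrightarrow> sg_gen S star a \<in> carrier (structure_group S star)"
  by (rule sg_gen_closed) (rule star_closed)

lemma atom_sg_gen_relation:
  "a \<in> S \<Longrightarrow> b \<in> S \<Longrightarrow>
     sg_gen S star a \<otimes>\<^bsub>structure_group S star\<^esub> sg_gen S star (star a b)
       = sg_gen S star b \<otimes>\<^bsub>structure_group S star\<^esub> sg_gen S star (star b a)"
  by (rule sg_gen_relation) (rule star_closed)

lemma atom_structure_group_generate:
  "carrier (structure_group S star) = generate (structure_group S star) (sg_gen S star ` S)"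
  by (rule structure_group_generate) (rule star_closed)

lemma cycle_relationsD:
  assumes cycle_relations and i: "i \<in> {1..n}" and j: "j \<in> {1..n}"
  shows "s i \<otimes>\<^bsub>Sigma_n n\<^esub> s (snd (s i) j) = s j \<otimes>\<^bsub>Sigma_n n\<^esub> s (snd (s j) i)"
  using assms(1) i j unfolding cycle_relations_def star_s[OF j, symmetric] star_s[OF i, symmetric] by blast

lemma monomial_cycle_repI:
  assumes "group H" "phi \<in> hom H (Sigma_n n)"
    and "\<And>i. i \<in> {1..n} \<Longrightarrow> x i \<in> carrier H" "\<And>i. i \<in> {1..n} \<Longrightarrow> phi (x i) = s i"
    and "\<And>i j. i \<in> {1..n} \<Longrightarrow> j \<in> {1..n} \<Longrightarrow>
           x i \<otimes>\<^bsub>H\<^esub> x (snd (s i) j) = x j \<otimes>\<^bsub>H\<^esub> x (snd (s j) i)"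
  shows "monomial_cycle_rep H n k s phi x"
  using assms by (intro monomial_cycle_rep.intro monomial_cycle_rep_axioms.intro) (auto simp: fst_s k_pos)

lemma permutation_free_imp_cycle_relations:
  assumes "permutation_free n G"
  shows cycle_relations
  unfolding cycle_relations_def
proof (intro ballI)
  interpret Sigma: group "Sigma_n n" by (rule group_Sigma_n)
  fix a b assume "a \<in> S" "b \<in> S"
  then obtain i j where ij: "i \<in> {1..n}" "j \<in> {1..n}" and ab: "a = s i" "b = s j" by blast
  define A where "A = s i \<otimes>\<^bsub>Sigma_n n\<^esub> s (snd (s i) j)"
  define B where "B = s j \<otimes>\<^bsub>Sigma_n n\<^esub> s (snd (s j) i)"
  have in_G: "A \<in> G" "B \<in> G"
    using ij perm_s_in s_in_G subgroup.m_closed[OF subgroup_G] by (simp_all add: A_def B_def)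
  then have closed: "A \<in> carrier (Sigma_n n)" "B \<in> carrier (Sigma_n n)"
    using subgroup.subset[OF subgroup_G] by auto
  have "fst A = fst B"
    using ij perm_s_in permutes_inj[OF perm_s_permutes[OF ij(1)]] permutes_inj[OF perm_s_permutes[OF ij(2)]]
    by (auto simp: A_def B_def mult_Sigma_n fst_s Di_pow_def inj_eq fun_eq_iff)
  then obtain \<sigma> where \<sigma>: "\<sigma> permutes {1..n}" and A_eq: "A = B \<otimes>\<^bsub>Sigma_n n\<^esub> Pmat \<sigma>"
    using Sigma_n_eq_mult_Pmat_if_Dpart_eq[OF closed] by blast
  have "Pmat \<sigma> = inv\<^bsub>Sigma_n n\<^esub> B \<otimes>\<^bsub>Sigma_n n\<^esub> A"
    using A_eq closed \<sigma> by (simp add: Sigma.inv_solve_left Pmat_def carrier_Sigma_n)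
  also have "\<dots> \<in> G"
    using in_G subgroup_G by (simp add: subgroup.m_closed subgroup.m_inv_closed)
  finally have "Pmat \<sigma> = \<one>\<^bsub>Sigma_n n\<^esub>"
    using assms \<sigma> by (simp add: permutation_free_def)
  then show "a \<otimes>\<^bsub>Sigma_n n\<^esub> star a b = b \<otimes>\<^bsub>Sigma_n n\<^esub> star b a"
    unfolding ab star_s[OF ij(2)] star_s[OF ij(1)] using A_eq closed by (simp add: A_def B_def)
qed

lemma cycle_relations_imp_permutation_free:
  assumes cycle_relations
  shows "permutation_free n G"
  unfolding permutation_free_def
proof (intro allI impI)
  interpret rep: monomial_cycle_rep "Sigma_n n" n k s id s
    using assms by (intro monomial_cycle_repI group_Sigma_n) (auto simp: hom_def s_closed cycle_relationsD)
  fix \<sigma> assume "\<sigma> permutes {1..n}" "Pmat \<sigma> \<in> G"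
  then have "Pmat \<sigma> \<in> generate (Sigma_n n) S" using generate_atoms atoms_eq by simp
  then show "Pmat \<sigma> = \<one>\<^bsub>Sigma_n n\<^esub>"
    by (rule rep.Dpart_trivial_imp_one) (simp add: Pmat_def)
qed

lemma cycle_relations_imp_cycle_set:
  assumes cycle_relations
  shows "cycle_set S star"
  unfolding cycle_set_def
proof (intro conjI ballI)
  fix a assume "a \<in> S"
  then have "psi a permutes {1..n}" using perm_s_permutes by (auto simp: psi_def)
  moreover have "bij_betw s {1..n} S" by (rule inj_on_imp_bij_betw[OF inj_on_s])
  ultimately have "bij_betw (s \<circ> psi a \<circ> inv_into {1..n} s) S S"
    by (intro bij_betw_trans[OF bij_betw_inv_into] bij_betw_trans[OF permutes_imp_bij])
  then show "bij_betw (star a) S S" by (simp add: comp_def)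
next
  fix a b c assume "a \<in> S" "b \<in> S" "c \<in> S"
  then obtain i j l where ijl: "i \<in> {1..n}" "j \<in> {1..n}" "l \<in> {1..n}" and "a = s i" "b = s j" "c = s l"
    by blast
  have "snd (s (snd (s i) j)) \<circ> snd (s i) = snd (s (snd (s j) i)) \<circ> snd (s j)"
    using arg_cong[OF cycle_relationsD[OF assms ijl(1,2)], of snd] by (simp add: mult_Sigma_n)
  then show "star (star a b) (star a c) = star (star b a) (star b c)"
    unfolding \<open>a = s i\<close> \<open>b = s j\<close> \<open>c = s l\<close> star_s[OF ijl(1)] star_s[OF ijl(2)] star_s[OF ijl(3)]
      star_s[OF perm_s_in[OF ijl(1,3)]] star_s[OF perm_s_in[OF ijl(2,3)]]
    by (metis comp_apply)
qed

lemma cycle_relations_imp_structure_group_iso: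
  assumes cycle_relations
  shows "\<exists>h. h \<in> iso (structure_group S star) ((Sigma_n n)\<lparr>carrier := G\<rparr>) \<and>
             (\<forall>a\<in>S. h (sg_gen S star a) = a)"
proof -
  let ?SG = "structure_group S star"
  obtain h where h_hom: "h \<in> hom ?SG (Sigma_n n)"
    and h_gen: "\<And>a. a \<in> S \<Longrightarrow> h (sg_gen S star a) = a"
    using assms star_closed atoms_subset_carrier
    by (elim structure_group_lift) (auto simp: cycle_relations_def group_Sigma_n)
  interpret h: group_hom ?SG "Sigma_n n" h
    using h_hom group_Sigma_n group_atom_structure_group
    by (intro group_hom.intro group_hom_axioms.intro)
  have relation: "sg_gen S star (s i) \<otimes>\<^bsub>?SG\<^esub> sg_gen S star (s (snd (s i) j))
      = sg_gen S star (s j) \<otimes>\<^bsub>?SG\<^esub> sg_gen S star (s (snd (s j) i))"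
    if "i \<in> {1..n}" "j \<in> {1..n}" for i j
    using atom_sg_gen_relation[of "s i" "s j"] that
    unfolding star_s[OF that(1)] star_s[OF that(2)] by blast
  interpret rep: monomial_cycle_rep ?SG n k s h "\<lambda>i. sg_gen S star (s i)"
    using h_hom h_gen relation
    by (intro monomial_cycle_repI group_atom_structure_group atom_sg_gen_closed) auto
  have generators: "sg_gen S star ` S \<subseteq> carrier ?SG"
    using atom_sg_gen_closed by blast
  have carrier_SG: "carrier ?SG = generate ?SG ((\<lambda>i. sg_gen S star (s i)) ` {1..n})"
    using atom_structure_group_generate by (simp add: image_image)
  have "inj_on h (carrier ?SG)"
  proof (rule h.inj_on_one_iff[THEN iffD2], intro allI impI)
    fix y assume "y \<in> carrier ?SG" "h y = \<one>\<^bsub>Sigma_n n\<^esub>"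
    then show "y = \<one>\<^bsub>?SG\<^esub>"
      using carrier_SG by (intro rep.Dpart_trivial_imp_one) (auto simp: one_Sigma_n)
  qed
  moreover have "h ` carrier ?SG = G"
  proof -
    have "h ` carrier ?SG = h ` generate ?SG (sg_gen S star ` S)"
      by (simp only: atom_structure_group_generate[symmetric])
    also have "\<dots> = generate (Sigma_n n) (h ` sg_gen S star ` S)"
      by (rule h.generate_img[OF generators, symmetric])
    also have "h ` sg_gen S star ` S = (\<lambda>a. a) ` S"
      unfolding image_image by (intro image_cong refl h_gen imageI)
    finally show ?thesis using generate_atoms atoms_eq by simp
  qed
  ultimately have "h \<in> iso ?SG ((Sigma_n n)\<lparr>carrier := G\<rparr>)"
    using h_hom by (auto simp: iso_def hom_def bij_betw_def)
  with h_gen show ?thesis by blast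
qed

lemma structure_group_iso_imp_cycle_relations:
  assumes iso: "h \<in> iso (structure_group S star) ((Sigma_n n)\<lparr>carrier := G\<rparr>)"
    and h_gen: "\<forall>a\<in>S. h (sg_gen S star a) = a"
  shows cycle_relations
  unfolding cycle_relations_def
proof (intro ballI)
  let ?SG = "structure_group S star"
  let ?gen = "sg_gen S star"
  fix a b assume ab: "a \<in> S" "b \<in> S"
  have h_hom: "h \<in> hom ?SG ((Sigma_n n)\<lparr>carrier := G\<rparr>)" using iso by (simp add: iso_def)
  have gen: "h (?gen c) = c" if "c \<in> S" for c using h_gen that by blast
  have h_mult: "h (?gen c \<otimes>\<^bsub>?SG\<^esub> ?gen (star c d)) = c \<otimes>\<^bsub>Sigma_n n\<^esub> star c d"
    if "c \<in> S" "d \<in> S" for c d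
  proof -
    have cd: "star c d \<in> S" using star_closed that by blast
    have "h (?gen c \<otimes>\<^bsub>?SG\<^esub> ?gen (star c d)) = h (?gen c) \<otimes>\<^bsub>Sigma_n n\<^esub> h (?gen (star c d))"
      using hom_mult[OF h_hom atom_sg_gen_closed[OF that(1)]
          atom_sg_gen_closed[OF cd]] by simp
    then show ?thesis using gen[OF that(1)] gen[OF cd] by simp
  qed
  show "a \<otimes>\<^bsub>Sigma_n n\<^esub> star a b = b \<otimes>\<^bsub>Sigma_n n\<^esub> star b a"
    using atom_sg_gen_relation[OF ab] h_mult[OF ab] h_mult[OF ab(2,1)] by simp
qed

end

theorem mainTheorem2:
  fixes n :: nat and G :: "mono set" and s :: "nat \<Rightarrow> mono" and k :: int
  assumes "subgroup G (Sigma_n n)"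
    and "atoms (Sigma_n n) (G \<inter> Sigma_n_plus n) = s ` {1..n}"
    and "card (atoms (Sigma_n n) (G \<inter> Sigma_n_plus n)) = n"
    and "generate (Sigma_n n) (atoms (Sigma_n n) (G \<inter> Sigma_n_plus n)) = G"
    and "k > 0"
    and "\<forall>i\<in>{1..n}. Dpart (s i) = Di_pow i k"
  shows "let S = atoms (Sigma_n n) (G \<inter> Sigma_n_plus n);
             star = (\<lambda>a b. s (psi a (inv_into {1..n} s b)))
         in (permutation_free n G
               \<longleftrightarrow> (\<forall>a\<in>S. \<forall>b\<in>S. a \<otimes>\<^bsub>Sigma_n n\<^esub> star a b = b \<otimes>\<^bsub>Sigma_n n\<^esub> star b a))
          \<and> (permutation_free n G
               \<longleftrightarrow> (cycle_set S star \<and>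
                    (\<exists>h. h \<in> iso (structure_group S star) ((Sigma_n n)\<lparr>carrier := G\<rparr>) \<and>
                         (\<forall>a\<in>S. h (sg_gen S star a) = a))))"
proof -
  interpret atom_generated_group n G s k
    using assms by (rule atom_generated_group.intro)
  have "permutation_free n G \<longleftrightarrow> cycle_relations"
    using permutation_free_imp_cycle_relations cycle_relations_imp_permutation_free by blast
  moreover have "cycle_relations \<longleftrightarrow>
      cycle_set (s ` {1..n}) star \<and>
      (\<exists>h. h \<in> iso (structure_group (s ` {1..n}) star) ((Sigma_n n)\<lparr>carrier := G\<rparr>) \<and>
           (\<forall>a\<in>s ` {1..n}. h (sg_gen (s ` {1..n}) star a) = a))"
    using cycle_relations_imp_cycle_set cycle_relations_imp_structure_group_iso
      structure_group_iso_imp_cycle_relations by blast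
  ultimately show ?thesis
    unfolding Let_def assms(2) cycle_relations_def by blast
qed

end
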